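(* Let $G$ be a finite group and $N$ a normal subgroup of $G$ with $1\neq N\neq G$. If $\mathcal{D}(G)-\mathcal{D}_G(N)=m$, then $\mathcal{D}(G/N)\le m-1$. In particular, $\mathcal{D}(G/N)\le \mathcal{D}(G)-1$.
   Context: All groups are finite. $\mathcal{D}(G)$ denotes the number of conjugacy classes of nontrivial subgroups $H$ of $G$ with $N_G(H)\neq H$. For $N\trianglelefteq G$, $\mathcal{D}_G(N)$ denotes the number of $G$-conjugacy classes of nontrivial subgroups $H$ of $G$ with $N_G(H)\neq H$ that are properly contained in $N$. *)

theory Defs
  imports "HOL-Algebra.Algebra"
begin

definition conj_class :: "('a, 'b) monoid_scheme \<Rightarrow> 'a set \<Rightarrow> 'a set set" where
  "conj_class G H = (\<lambda>g. g <#\<^bsub>G\<^esub> H #>\<^bsub>G\<^esub> inv\<^bsub>G\<^esub> g) ` carrier G"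

definition non_self_norm :: "('a, 'b) monoid_scheme \<Rightarrow> 'a set set" where
  "non_self_norm G = {H. subgroup H G \<and> H \<noteq> {\<one>\<^bsub>G\<^esub>} \<and> normalizer G H \<noteq> H}"

definition DD :: "('a, 'b) monoid_scheme \<Rightarrow> nat" where
  "DD G = card (conj_class G ` non_self_norm G)"

definition DD_rel :: "('a, 'b) monoid_scheme \<Rightarrow> 'a set \<Rightarrow> nat" where
  "DD_rel G N = card (conj_class G ` {H \<in> non_self_norm G. H \<subset> N})"

end

theory Submission
  imports Defs
begin

text \<open>A proper nontrivial normal subgroup \<open>N\<close> is itself counted by \<open>\<D>(G)\<close>, since its
normalizer is all of \<open>G\<close>. Conjugation preserves containment in \<open>N\<close>, so the classes counted
by \<open>\<D>(G)\<close> split into those of subgroups properly inside \<open>N\<close> (counted by \<open>\<D>\<^sub>G(N)\<close>), the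
class \<open>{N}\<close>, and those of subgroups not contained in \<open>N\<close>. Under the correspondence
\<open>Q \<mapsto> \<Union>Q\<close> a nontrivial non-self-normalizing subgroup of \<open>G/N\<close> goes to a non-self-normalizing
subgroup of \<open>G\<close> properly containing \<open>N\<close>, and conjugacy classes go to conjugacy classes
injectively. Hence \<open>\<D>(G/N) \<le> \<D>(G) - \<D>\<^sub>G(N) - 1\<close>.\<close>

lemma mem_normalizer_iff:
  assumes "H \<subseteq> carrier G"
  shows "g \<in> normalizer G H \<longleftrightarrow> g \<in> carrier G \<and> g <#\<^bsub>G\<^esub> H #>\<^bsub>G\<^esub> inv\<^bsub>G\<^esub> g = H"
  using assms unfolding normalizer_def stabilizer_def by auto

lemma non_self_norm_subset_carrier:
  "K \<in> non_self_norm G \<Longrightarrow> K \<subseteq> carrier G"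
  by (simp add: non_self_norm_def subgroup.subset)

lemma conj_Union:
  "\<Union>((\<lambda>q. g <#\<^bsub>G\<^esub> q #>\<^bsub>G\<^esub> x) ` Q) = g <#\<^bsub>G\<^esub> \<Union>Q #>\<^bsub>G\<^esub> x"
  unfolding l_coset_def r_coset_def by auto

lemma conj_mono:
  "H \<subseteq> K \<Longrightarrow> g <#\<^bsub>G\<^esub> H #>\<^bsub>G\<^esub> x \<subseteq> g <#\<^bsub>G\<^esub> K #>\<^bsub>G\<^esub> x"
  unfolding l_coset_def r_coset_def by auto

lemma (in group) self_mem_conj_class:
  "H \<subseteq> carrier G \<Longrightarrow> H \<in> conj_class G H"
  unfolding conj_class_def by (rule image_eqI[of _ _ \<one>]) (simp_all add: lcos_mult_one)

lemma (in group) conj_class_subset_Pow: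
  "H \<subseteq> carrier G \<Longrightarrow> conj_class G H \<subseteq> Pow (carrier G)"
proof
  fix K assume H: "H \<subseteq> carrier G" and "K \<in> conj_class G H"
  then obtain g where "g \<in> carrier G" "K = g <# H #> inv g" unfolding conj_class_def by blast
  with H show "K \<in> Pow (carrier G)" by (simp add: r_coset_subset_G l_coset_subset_G)
qed

lemma (in group) finite_conj_classes:
  assumes "finite (carrier G)" "\<H> \<subseteq> Pow (carrier G)"
  shows "finite (conj_class G ` \<H>)"
proof (rule finite_subset)
  show "conj_class G ` \<H> \<subseteq> Pow (Pow (carrier G))"
    using assms(2) conj_class_subset_Pow by blast
qed (simp add: assms(1))

lemma (in group) subgroup_subset_normalizer:
  assumes "subgroup H G"
  shows "H \<subseteq> normalizer G H"
proof
  fix x assume x: "x \<in> H"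
  then have "x <# H #> inv x = H"
    using assms by (simp add: coset_join3 subgroup.mem_carrier subgroup.rcos_const subgroup.m_inv_closed)
  then show "x \<in> normalizer G H"
    using x assms by (simp add: mem_normalizer_iff subgroup.subset subgroup.mem_carrier)
qed

lemma (in normal) conj_eq:
  assumes "g \<in> carrier G"
  shows "g <# H #> inv g = H"
proof -
  have "g <# H = H #> g" using coset_eq assms by simp
  then show ?thesis using assms by (simp add: coset_mult_assoc subset)
qed

lemma (in normal) conj_class_normal: "conj_class G H = {H}"
  unfolding conj_class_def using conj_eq by auto

lemma (in normal) normalizer_normal: "normalizer G H = carrier G"
  using conj_eq by (auto simp: mem_normalizer_iff subset)

lemma (in normal) conj_class_subset:
  assumes "K \<in> conj_class G L" "L \<subseteq> H"
  shows "K \<subseteq> H"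
proof -
  obtain g where "g \<in> carrier G" "K = g <# L #> inv g"
    using assms(1) unfolding conj_class_def by blast
  moreover have "g <# L #> inv g \<subseteq> g <# H #> inv g" using assms(2) by (rule conj_mono)
  ultimately show ?thesis using conj_eq by simp
qed

lemma (in normal) conj_class_eq_imp_subset:
  assumes "conj_class G K = conj_class G L" "K \<subseteq> carrier G" "L \<subseteq> H"
  shows "K \<subseteq> H"
  using assms self_mem_conj_class conj_class_subset by metis

lemma (in normal) conj_rcos:
  assumes "g \<in> carrier G" "y \<in> carrier G"
  shows "g <# (H #> y) #> inv g = H #> (g \<otimes> y \<otimes> inv g)"
proof -
  have "g <# (H #> y) = (g <# H) #> y"
    using assms by (simp add: coset_assoc subset)
  also have "\<dots> = (H #> g) #> y"
    using assms coset_eq by simp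
  also have "\<dots> = H #> (g \<otimes> y)"
    using assms by (simp add: coset_mult_assoc subset)
  finally have "g <# (H #> y) = H #> (g \<otimes> y)" .
  then show ?thesis using assms by (simp add: coset_mult_assoc subset)
qed

lemma (in normal) conj_FactGroup:
  assumes g: "g \<in> carrier G" and Q: "Q \<subseteq> rcosets H"
  shows "(H #> g) <#\<^bsub>G Mod H\<^esub> Q #>\<^bsub>G Mod H\<^esub> inv\<^bsub>G Mod H\<^esub> (H #> g)
    = (\<lambda>q. g <# q #> inv g) ` Q"
proof -
  have "(H #> g) <#\<^bsub>G Mod H\<^esub> Q #>\<^bsub>G Mod H\<^esub> c = (\<lambda>q. (H #> g) <#> q <#> c) ` Q" for c
    unfolding l_coset_def r_coset_def by auto
  moreover have "inv\<^bsub>G Mod H\<^esub> (H #> g) = H #> inv g"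
    using g by (simp add: inv_FactGroup carrier_FactGroup rcos_inv)
  moreover have "(H #> g) <#> q <#> (H #> inv g) = g <# q #> inv g" if q: "q \<in> Q" for q
  proof -
    obtain y where "y \<in> carrier G" "q = H #> y" using q Q unfolding RCOSETS_def by auto
    then show ?thesis using g by (simp add: rcos_sum conj_rcos)
  qed
  ultimately show ?thesis by simp
qed

lemma (in normal) Union_conj_class_FactGroup:
  assumes "Q \<subseteq> rcosets H"
  shows "Union ` conj_class (G Mod H) Q = conj_class G (\<Union>Q)"
proof -
  have "conj_class (G Mod H) Q = (\<lambda>g. (\<lambda>q. g <# q #> inv g) ` Q) ` carrier G"
    unfolding conj_class_def carrier_FactGroup image_image
    using conj_FactGroup[OF _ assms] by simp
  then show ?thesis by (simp add: conj_class_def image_image conj_Union)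
qed

lemma (in group) image_rcos_Union:
  assumes "subgroup H G" "Q \<subseteq> rcosets H"
  shows "(\<lambda>x. H #> x) ` \<Union>Q = Q"
proof (intro equalityI subsetI)
  fix c assume "c \<in> (\<lambda>x. H #> x) ` \<Union>Q"
  then obtain q x where "q \<in> Q" "x \<in> q" "c = H #> x" by blast
  moreover obtain y where "y \<in> carrier G" "q = H #> y"
    using \<open>q \<in> Q\<close> assms(2) unfolding RCOSETS_def by auto
  ultimately show "c \<in> Q" using assms(1) repr_independence by auto
next
  fix q assume "q \<in> Q"
  moreover obtain y where "y \<in> carrier G" "q = H #> y"
    using \<open>q \<in> Q\<close> assms(2) unfolding RCOSETS_def by auto
  ultimately show "q \<in> (\<lambda>x. H #> x) ` \<Union>Q" using assms(1) rcos_self by blast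
qed

lemma (in group) inj_on_Union_rcosets:
  "subgroup H G \<Longrightarrow> inj_on Union (Pow (rcosets H))"
  by (rule inj_on_inverseI[where g = "image (\<lambda>x. H #> x)"]) (simp add: image_rcos_Union)

lemma (in normal) normalizer_Union_FactGroup:
  assumes Q: "Q \<subseteq> rcosets H" and g: "g \<in> carrier G"
    and norm: "H #> g \<in> normalizer (G Mod H) Q"
  shows "g \<in> normalizer G (\<Union>Q)"
proof -
  have "(H #> g) <#\<^bsub>G Mod H\<^esub> Q #>\<^bsub>G Mod H\<^esub> inv\<^bsub>G Mod H\<^esub> (H #> g) = Q"
    using norm Q by (simp add: mem_normalizer_iff FactGroup_def)
  then have "(\<lambda>q. g <# q #> inv g) ` Q = Q" using conj_FactGroup[OF g Q] by simp
  then have "g <# \<Union>Q #> inv g = \<Union>Q" by (metis conj_Union)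
  moreover have "\<Union>Q \<subseteq> carrier G" using Q rcosets_part_G is_subgroup by blast
  ultimately show ?thesis using g by (simp add: mem_normalizer_iff)
qed

lemma (in normal) Union_mem_non_self_norm:
  assumes "Q \<in> non_self_norm (G Mod H)"
  shows "\<Union>Q \<in> non_self_norm G" and "H \<subset> \<Union>Q"
proof -
  interpret GH: group "G Mod H" by (rule factorgroup_is_group)
  have sQ: "subgroup Q (G Mod H)" and "Q \<noteq> {H}" and "normalizer (G Mod H) Q \<noteq> Q"
    using assms by (auto simp: non_self_norm_def)
  have Qr: "Q \<subseteq> rcosets H" using non_self_norm_subset_carrier[OF assms] by (simp add: FactGroup_def)
  have U: "\<Union>Q = {x \<in> carrier G. H #> x \<in> Q}" by (rule factgroup_subgroup_union_char[OF sQ])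
  have "H \<in> Q" using subgroup.one_closed[OF sQ] by simp
  with \<open>Q \<noteq> {H}\<close> obtain c where "c \<in> Q" "c \<noteq> H" by blast
  moreover obtain y where "y \<in> carrier G" "c = H #> y"
    using \<open>c \<in> Q\<close> Qr unfolding RCOSETS_def by blast
  ultimately have y_new: "y \<in> \<Union>Q - H" using U rcos_const[OF is_group] by auto
  with \<open>H \<in> Q\<close> show "H \<subset> \<Union>Q" by blast
  obtain c where c: "c \<in> normalizer (G Mod H) Q" "c \<notin> Q"
    using GH.subgroup_subset_normalizer[OF sQ] \<open>normalizer (G Mod H) Q \<noteq> Q\<close> by blast
  then have "c \<in> carrier (G Mod H)"
    using subgroup.subset[OF sQ] by (simp add: mem_normalizer_iff)
  then obtain g where g: "g \<in> carrier G" "c = H #> g" by (auto simp: carrier_FactGroup)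
  have "g \<in> normalizer G (\<Union>Q)"
    using c(1) unfolding g(2) by (rule normalizer_Union_FactGroup[OF Qr g(1)])
  moreover have "g \<notin> \<Union>Q" using U c(2) g by simp
  ultimately have "normalizer G (\<Union>Q) \<noteq> \<Union>Q" by blast
  moreover have "subgroup (\<Union>Q) G" by (rule factgroup_subgroup_union_subgroup[OF sQ])
  moreover have "\<Union>Q \<noteq> {\<one>}" using y_new subgroup.one_closed[OF is_subgroup]
    by (metis DiffE singletonD)
  ultimately show "\<Union>Q \<in> non_self_norm G" unfolding non_self_norm_def by simp
qed

lemma (in normal) DD_eq:
  assumes fin: "finite (carrier G)" and H: "H \<in> non_self_norm G"
  shows "DD G = DD_rel G H + 1 + card (conj_class G ` {K \<in> non_self_norm G. \<not> K \<subseteq> H})"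
proof -
  define B where "B = conj_class G ` {K \<in> non_self_norm G. K \<subset> H}"
  define C where "C = conj_class G ` {K \<in> non_self_norm G. \<not> K \<subseteq> H}"
  have "finite B" "finite C"
    unfolding B_def C_def
    by (rule finite_conj_classes[OF fin], blast dest: non_self_norm_subset_carrier)+
  have "non_self_norm G = {K \<in> non_self_norm G. K \<subset> H} \<union> ({H} \<union> {K \<in> non_self_norm G. \<not> K \<subseteq> H})"
    using H by auto
  then have "conj_class G ` non_self_norm G = B \<union> ({conj_class G H} \<union> C)"
    unfolding B_def C_def by (metis image_Un image_insert image_empty insert_is_Un)
  moreover have "conj_class G H \<notin> C"
  proof
    assume "conj_class G H \<in> C"
    then obtain K where "K \<in> non_self_norm G" "\<not> K \<subseteq> H" "conj_class G K = conj_class G H"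
      unfolding C_def by auto
    then show False by (metis conj_class_eq_imp_subset non_self_norm_subset_carrier order_refl)
  qed
  moreover have "conj_class G H \<notin> B"
  proof
    assume "conj_class G H \<in> B"
    then obtain K where K: "K \<in> non_self_norm G" "K \<subset> H" "conj_class G K = conj_class G H"
      unfolding B_def by auto
    then have "K \<in> conj_class G H"
      using self_mem_conj_class non_self_norm_subset_carrier by metis
    then show False using K(2) conj_class_normal by simp
  qed
  moreover have "B \<inter> C = {}"
  proof (intro equals0I)
    fix c assume "c \<in> B \<inter> C"
    then obtain K L where "K \<in> non_self_norm G" "\<not> K \<subseteq> H" "L \<subset> H"
      and "conj_class G K = conj_class G L"
      unfolding B_def C_def by auto
    then show False by (metis conj_class_eq_imp_subset non_self_norm_subset_carrier psubset_imp_subset)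
  qed
  ultimately have "DD G = card B + (1 + card C)"
    unfolding DD_def using \<open>finite B\<close> \<open>finite C\<close> by (simp add: card_Un_disjoint)
  then show ?thesis unfolding DD_rel_def B_def C_def by simp
qed

lemma (in normal) DD_FactGroup_le:
  assumes fin: "finite (carrier G)"
  shows "DD (G Mod H) \<le> card (conj_class G ` {K \<in> non_self_norm G. \<not> K \<subseteq> H})"
proof -
  interpret GH: group "G Mod H" by (rule factorgroup_is_group)
  let ?S = "non_self_norm (G Mod H)"
  have rcosets: "carrier (G Mod H) = rcosets H" by (simp add: FactGroup_def)
  have S_sub: "Q \<subseteq> rcosets H" if "Q \<in> ?S" for Q
    using non_self_norm_subset_carrier[OF that] rcosets by simp
  have "conj_class (G Mod H) Q \<subseteq> Pow (rcosets H)" if "Q \<in> ?S" for Q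
    using GH.conj_class_subset_Pow[OF non_self_norm_subset_carrier[OF that]] rcosets by simp
  then have "conj_class (G Mod H) ` ?S \<subseteq> Pow (Pow (rcosets H))" by blast
  then have "inj_on (image Union) (conj_class (G Mod H) ` ?S)"
    by (rule inj_on_subset[OF inj_on_image_Pow[OF inj_on_Union_rcosets[OF is_subgroup]]])
  then have "DD (G Mod H) = card (image Union ` conj_class (G Mod H) ` ?S)"
    unfolding DD_def by (simp add: card_image)
  also have "\<dots> = card ((\<lambda>Q. conj_class G (\<Union>Q)) ` ?S)"
    unfolding image_image using S_sub Union_conj_class_FactGroup by (simp cong: image_cong)
  also have "\<dots> \<le> card (conj_class G ` {K \<in> non_self_norm G. \<not> K \<subseteq> H})"
  proof (rule card_mono)
    show "finite (conj_class G ` {K \<in> non_self_norm G. \<not> K \<subseteq> H})"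
      by (rule finite_conj_classes[OF fin]) (blast dest: non_self_norm_subset_carrier)
    show "(\<lambda>Q. conj_class G (\<Union>Q)) ` ?S \<subseteq> conj_class G ` {K \<in> non_self_norm G. \<not> K \<subseteq> H}"
    proof (rule image_subsetI)
      fix Q assume "Q \<in> ?S"
      then have "\<Union>Q \<in> {K \<in> non_self_norm G. \<not> K \<subseteq> H}"
        using Union_mem_non_self_norm by blast
      then show "conj_class G (\<Union>Q) \<in> conj_class G ` {K \<in> non_self_norm G. \<not> K \<subseteq> H}"
        by (rule imageI)
    qed
  qed
  finally show ?thesis .
qed

theorem mainTheorem2:
  fixes G :: "('a, 'b) monoid_scheme" and N :: "'a set" and m :: int
  assumes "group G" and "finite (carrier G)" and "N \<lhd> G"
    and "N \<noteq> {\<one>\<^bsub>G\<^esub>}" and "N \<noteq> carrier G"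
    and "int (DD G) - int (DD_rel G N) = m"
  shows "int (DD (G Mod N)) \<le> m - 1 \<and> DD (G Mod N) \<le> DD G - 1"
proof -
  interpret normal N G by (rule assms(3))
  have "N \<in> non_self_norm G"
    using assms(4,5) is_subgroup normalizer_normal by (simp add: non_self_norm_def)
  with assms(2)
  have "DD G = DD_rel G N + 1 + card (conj_class G ` {K \<in> non_self_norm G. \<not> K \<subseteq> N})"
    by (rule DD_eq)
  moreover have "DD (G Mod N) \<le> card (conj_class G ` {K \<in> non_self_norm G. \<not> K \<subseteq> N})"
    using assms(2) by (rule DD_FactGroup_le)
  ultimately show ?thesis using assms(6) by linarith
qed

end
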